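(* Let $G(\vec x)$ be a positive guard over the variables $\vec x$, and let $h$ be a history. Then the set of solutions of the guard instantiation problem $(h,G(\vec x))$ is finite. Moreover, every solution uses only constants that appear in $h$.
   Context: A history $h$ is a finite list of sessions $h_1,\dots,h_{|h|}$. Each session is a finite set of events $p(c_1,\dots,c_n)$, where $p$ is an uninterpreted predicate symbol and the $c_i$ are constants. Simple guards are generated by the grammar $$\gamma::=p(\vec u)\mid\gamma\wedge\gamma\mid\mathbf{G}^{-1}\gamma\mid\mathbf{F}^{-1}\gamma,$$ where $\vec u$ is a list of variables and constants (no function symbols). Positive guards $G(\vec x)$ over variables $\vec x$ are formulas whose only variables are among $\vec x$, generated by $$G::=\gamma(\vec x)\mid G\wedge G\mid G\vee G\mid\mathbf{G}^{-1}G\mid\mathbf{F}^{-1}G\mid G\,\mathbf{S}\,G.$$ For closed formulas and $1\le i\le|h|$: - $(h,i)\models p(\vec c)$ iff $p(\vec c)\in h_i$; - $\wedge$ and $\vee$ are interpreted classically; - $(h,i)\models\psi_1\,\mathbf{S}\,\psi_2$ iff there is $j\le i$ with $(h,j)\models\psi_2$ and $(h,k)\models\psi_1$ for all $k$ with $j<k\le i$; - $\mathbf{F}^{-1}\psi$ holds at $i$ iff $\psi$ holds at some $j\le i$; - $\mathbf{G}^{-1}\psi$ holds at $i$ iff $\psi$ holds at all $j\le i$. We write $h\models\psi$ for $(h,|h|)\models\psi$. The guard instantiation problem $(h,G(\vec x))$ asks for a list $\vec u$ of constants such that $h\models G(\vec u)$. Any such list is called a solution. *)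

theory Defs
  imports Main
begin

datatype ('v, 'c) trm = Var 'v | Const 'c

text \<open>Past-time formulas; the argument type 'a of atoms is either
  ('v,'c) trm (open formulas) or 'c (closed formulas).
  Hist = G^{-1}, Once = F^{-1}, Since = S.\<close>
datatype ('p, 'a) fm =
    Atom 'p "'a list"
  | And "('p, 'a) fm" "('p, 'a) fm"
  | Or "('p, 'a) fm" "('p, 'a) fm"
  | Hist "('p, 'a) fm"
  | Once "('p, 'a) fm"
  | Since "('p, 'a) fm" "('p, 'a) fm"

text \<open>Events p(c1,...,cn) are pairs (p, [c1,...,cn]); a session is a set of events;
  a history is a list of sessions h_1 ... h_|h| (h_i = h ! (i-1)).\<close>
type_synonym ('p, 'c) session = "('p \<times> 'c list) set"
type_synonym ('p, 'c) history = "('p, 'c) session list"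

text \<open>Semantics of closed formulas at position i (1-based).\<close>
primrec sat :: "('p, 'c) history \<Rightarrow> nat \<Rightarrow> ('p, 'c) fm \<Rightarrow> bool" where
  "sat h i (Atom p cs) = (1 \<le> i \<and> i \<le> length h \<and> (p, cs) \<in> h ! (i - 1))"
| "sat h i (And a b) = (sat h i a \<and> sat h i b)"
| "sat h i (Or a b) = (sat h i a \<or> sat h i b)"
| "sat h i (Hist a) = (\<forall>j. 1 \<le> j \<and> j \<le> i \<longrightarrow> sat h j a)"
| "sat h i (Once a) = (\<exists>j. 1 \<le> j \<and> j \<le> i \<and> sat h j a)"
| "sat h i (Since a b) =
     (\<exists>j. 1 \<le> j \<and> j \<le> i \<and> sat h j b \<and> (\<forall>k. j < k \<and> k \<le> i \<longrightarrow> sat h k a))"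

text \<open>h |= psi iff (h,|h|) |= psi; the semantics is only defined for 1 <= |h|.\<close>
definition models :: "('p, 'c) history \<Rightarrow> ('p, 'c) fm \<Rightarrow> bool" where
  "models h \<phi> \<longleftrightarrow> h \<noteq> [] \<and> sat h (length h) \<phi>"

fun trm_vars :: "('v, 'c) trm \<Rightarrow> 'v set" where
  "trm_vars (Var v) = {v}"
| "trm_vars (Const c) = {}"

primrec fm_vars :: "('p, ('v, 'c) trm) fm \<Rightarrow> 'v set" where
  "fm_vars (Atom p us) = (\<Union>u\<in>set us. trm_vars u)"
| "fm_vars (And a b) = fm_vars a \<union> fm_vars b"
| "fm_vars (Or a b) = fm_vars a \<union> fm_vars b"
| "fm_vars (Hist a) = fm_vars a"
| "fm_vars (Once a) = fm_vars a"
| "fm_vars (Since a b) = fm_vars a \<union> fm_vars b"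

primrec simple_guard :: "('p, 'a) fm \<Rightarrow> bool" where
  "simple_guard (Atom p us) = True"
| "simple_guard (And a b) = (simple_guard a \<and> simple_guard b)"
| "simple_guard (Or a b) = False"
| "simple_guard (Hist a) = simple_guard a"
| "simple_guard (Once a) = simple_guard a"
| "simple_guard (Since a b) = False"

inductive pos_guard :: "'v list \<Rightarrow> ('p, ('v, 'c) trm) fm \<Rightarrow> bool" for xs where
  pg_simple: "simple_guard g \<Longrightarrow> fm_vars g = set xs \<Longrightarrow> pos_guard xs g"
| pg_and: "pos_guard xs a \<Longrightarrow> pos_guard xs b \<Longrightarrow> pos_guard xs (And a b)"
| pg_or: "pos_guard xs a \<Longrightarrow> pos_guard xs b \<Longrightarrow> pos_guard xs (Or a b)"
| pg_hist: "pos_guard xs a \<Longrightarrow> pos_guard xs (Hist a)"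
| pg_once: "pos_guard xs a \<Longrightarrow> pos_guard xs (Once a)"
| pg_since: "pos_guard xs a \<Longrightarrow> pos_guard xs b \<Longrightarrow> pos_guard xs (Since a b)"

fun inst_trm :: "'v list \<Rightarrow> 'c list \<Rightarrow> ('v, 'c) trm \<Rightarrow> 'c" where
  "inst_trm xs us (Const c) = c"
| "inst_trm xs us (Var v) = the (map_of (zip xs us) v)"

definition inst :: "'v list \<Rightarrow> 'c list \<Rightarrow> ('p, ('v, 'c) trm) fm \<Rightarrow> ('p, 'c) fm" where
  "inst xs us G = map_fm id (inst_trm xs us) G"

definition solutions :: "('p, 'c) history \<Rightarrow> 'v list \<Rightarrow> ('p, ('v, 'c) trm) fm \<Rightarrow> 'c list set" where
  "solutions h xs G = {us. length us = length xs \<and> models h (inst xs us G)}"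

definition hist_consts :: "('p, 'c) history \<Rightarrow> 'c set" where
  "hist_consts h = (\<Union>s\<in>set h. \<Union>e\<in>s. set (snd e))"

end

theory Submission
  imports Defs
begin

text \<open>Every variable of a positive guard occurs in some simple guard that must hold at some
  position of the history, and every variable of a satisfied simple guard occurs in some
  atom that holds at some position. Hence each value of a solution is an argument of an event
  of the history. As the history consists of finitely many finite sessions, it has finitely
  many constants, so only finitely many lists of the fixed length qualify.\<close>

lemma sat_Atom_args_in_hist_consts:
  assumes "sat h i (Atom p cs)"
  shows "set cs \<subseteq> hist_consts h"
proof -
  from assms have "h ! (i - 1) \<in> set h" and "(p, cs) \<in> h ! (i - 1)"
    by (auto intro!: nth_mem)
  then show ?thesis
    unfolding hist_consts_def by force
qed

lemma mem_trm_vars_iff: "v \<in> trm_vars u \<longleftrightarrow> u = Var v"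
  by (cases u) auto

lemma simple_guard_sat_var_in_hist_consts:
  assumes "simple_guard g" and "1 \<le> i" and "sat h i (map_fm pm f g)" and "v \<in> fm_vars g"
  shows "f (Var v) \<in> hist_consts h"
  using assms
proof (induction g arbitrary: i)
  case (Atom p us)
  then have "Var v \<in> set us"
    by (auto simp: mem_trm_vars_iff)
  with Atom.prems(3) sat_Atom_args_in_hist_consts[of h i "pm p" "map f us"] show ?case
    by auto
next
  case (Once g)
  then obtain j where "1 \<le> j" and "sat h j (map_fm pm f g)"
    by auto
  with Once show ?case
    by simp
qed auto

lemma pos_guard_sat_var_in_hist_consts:
  assumes "pos_guard xs G" and "1 \<le> i" and "sat h i (map_fm pm f G)" and "v \<in> set xs"
  shows "f (Var v) \<in> hist_consts h"
  using assms
proof (induction arbitrary: i rule: pos_guard.induct)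
  case (pg_simple g)
  then show ?case
    by (intro simple_guard_sat_var_in_hist_consts[of g i h pm f]) simp_all
next
  case (pg_and a b)
  from pg_and.prems(2) have "sat h i (map_fm pm f a)"
    by simp
  then show ?case
    by (rule pg_and.IH(1)[OF pg_and.prems(1) _ pg_and.prems(3)])
next
  case (pg_or a b)
  from pg_or.prems(2) consider "sat h i (map_fm pm f a)" | "sat h i (map_fm pm f b)"
    by auto
  then show ?case
    using pg_or.IH pg_or.prems(1,3) by cases
next
  case (pg_hist a)
  from pg_hist.prems(1,2) have "sat h i (map_fm pm f a)"
    by simp
  then show ?case
    by (rule pg_hist.IH[OF pg_hist.prems(1) _ pg_hist.prems(3)])
next
  case (pg_once a)
  from pg_once.prems(2) obtain j where "1 \<le> j" and "sat h j (map_fm pm f a)"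
    by auto
  then show ?case
    by (rule pg_once.IH[OF _ _ pg_once.prems(3)])
next
  case (pg_since a b)
  from pg_since.prems(2) obtain j where "1 \<le> j" and "sat h j (map_fm pm f b)"
    by auto
  then show ?case
    by (rule pg_since.IH(2)[OF _ _ pg_since.prems(3)])
qed

lemma inst_trm_Var_nth:
  assumes "distinct xs" and "length us = length xs" and "k < length xs"
  shows "inst_trm xs us (Var (xs ! k)) = us ! k"
  using map_of_zip_nth[of xs us k] assms by simp

lemma solution_in_hist_consts:
  assumes "distinct xs" and "pos_guard xs G" and "us \<in> solutions h xs G"
  shows "set us \<subseteq> hist_consts h"
proof
  fix u
  assume "u \<in> set us"
  then obtain k where k: "k < length us" and u: "u = us ! k"
    by (auto simp: in_set_conv_nth)
  from assms(3) have len: "length us = length xs" and nonempty: "1 \<le> length h"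
    and sat: "sat h (length h) (map_fm id (inst_trm xs us) G)"
    by (auto simp: solutions_def models_def inst_def Suc_le_eq)
  have "inst_trm xs us (Var (xs ! k)) \<in> hist_consts h"
    using pos_guard_sat_var_in_hist_consts[OF assms(2) nonempty sat] k len by simp
  then show "u \<in> hist_consts h"
    using inst_trm_Var_nth[OF assms(1) len] k len u by simp
qed

lemma finite_hist_consts:
  assumes "\<forall>s\<in>set h. finite s"
  shows "finite (hist_consts h)"
  using assms unfolding hist_consts_def by auto

theorem mainTheorem7:
  fixes h :: "('p, 'c) history" and xs :: "'v list" and G :: "('p, ('v, 'c) trm) fm"
  assumes "\<forall>s\<in>set h. finite s"
    and "distinct xs"
    and "pos_guard xs G"
  shows "finite (solutions h xs G) \<and> (\<forall>us\<in>solutions h xs G. set us \<subseteq> hist_consts h)"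
proof
  show in_consts: "\<forall>us\<in>solutions h xs G. set us \<subseteq> hist_consts h"
    using solution_in_hist_consts[OF assms(2,3)] by blast
  have "solutions h xs G \<subseteq> {us. set us \<subseteq> hist_consts h \<and> length us = length xs}"
    using in_consts by (auto simp: solutions_def)
  moreover have "finite {us. set us \<subseteq> hist_consts h \<and> length us = length xs}"
    using finite_lists_length_eq[OF finite_hist_consts[OF assms(1)]] .
  ultimately show "finite (solutions h xs G)"
    by (rule finite_subset)
qed

end
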